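(* Let $X$ be a centered Gaussian random vector in a separable Hilbert space $(H,\langle\cdot,\cdot\rangle)$ with ${\mathbb E}\|X\|^2<\infty$ whose covariance operator $C_X y={\mathbb E}(\langle y,X\rangle X)$ has infinitely many nonzero eigenvalues $\lambda_1\ge\lambda_2\ge\dots>0$ with corresponding orthonormal eigenvectors $(u_j)_{j\ge1}$, so that $X=\sum_{j\ge1}\lambda_j^{1/2}Z_ju_j$ with $Z_j:=\langle X,u_j\rangle/\lambda_j^{1/2}$ i.i.d. $N(0,1)$. Let $n\ge1$ and let $m,l,n_1,\dots,n_m\in{\mathbb N}$ with $\prod_{j=1}^m n_j\le n$. For $j=1,\dots,m$ let $Z^{(j)}:=(Z_{(j-1)l+1},\dots,Z_{jl})$, let $\alpha_j\subset{\mathbb R}^l$ be an $L^2$-optimal $n_j$-quantizer for $Z^{(j)}$ (with respect to the Euclidean norm), let $\widehat{Z^{(j)}}=\sum_{b\in\alpha_j}b\,\mathbf 1_{C_b(\alpha_j)}(Z^{(j)})$ be a Voronoi $\alpha_j$-quantization of $Z^{(j)}$, and set \[\hat X^n:=\sum_{j=1}^m\sum_{k=1}^l\lambda^{1/2}_{(j-1)l+k}(\widehat{Z^{(j)}})_k\,u_{(j-1)l+k}.\] Then \[{\mathbb E}\|X-\hat X^n\|^2\le\sum_{j=1}^m\lambda_{(j-1)l+1}\,e_{n_j}(N(0,I_l))^2+\sum_{j\ge ml+1}\lambda_j.\] Moreover, this inequality is an equality if $l=1$ (or if $\lambda_{(j-1)l+1}=\dots=\lambda_{jl}$ for every $j$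).
   Context: For a random vector $Y$ in ${\mathbb R}^d$ (Euclidean norm) or in $H$ with finite second moment, $e_k(Y):=\inf\{({\mathbb E}\min_{a\in\alpha}\|Y-a\|^2)^{1/2}:\mathrm{card}(\alpha)\le k\}$, and $e_k(N(0,I_l))$ denotes this quantity for a standard normal vector in ${\mathbb R}^l$. An $L^2$-optimal $k$-quantizer for $Y$ is a set $\alpha$ with $\mathrm{card}(\alpha)\le k$ attaining this infimum. A Voronoi partition $\{C_b(\alpha):b\in\alpha\}$ is a Borel partition with $C_b(\alpha)\subset\{x:\|x-b\|=\min_{c\in\alpha}\|x-c\|\}$. *)

theory Defs
  imports "HOL-Probability.Probability"
begin

text \<open>Points of R^l are represented as functions nat => real, of which only the
  coordinates 0..l-1 matter (coordinate k of the paper, k = 1..l, is index k-1).\<close>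

definition sqdist_l :: "nat \<Rightarrow> (nat \<Rightarrow> real) \<Rightarrow> (nat \<Rightarrow> real) \<Rightarrow> real" where
  "sqdist_l l x y = (\<Sum>k<l. (x k - y k)^2)"

text \<open>Squared distance of x to a codebook alpha (infinite for the empty codebook).\<close>
definition mindist_l :: "nat \<Rightarrow> (nat \<Rightarrow> real) set \<Rightarrow> (nat \<Rightarrow> real) \<Rightarrow> ennreal" where
  "mindist_l l \<alpha> x = (INF a\<in>\<alpha>. ennreal (sqdist_l l x a))"

definition qdistortion :: "'w measure \<Rightarrow> nat \<Rightarrow> ('w \<Rightarrow> nat \<Rightarrow> real) \<Rightarrow> (nat \<Rightarrow> real) set \<Rightarrow> ennreal" where
  "qdistortion M l Y \<alpha> = (\<integral>\<^sup>+ w. mindist_l l \<alpha> (Y w) \<partial>M)"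

definition qerr_sq :: "'w measure \<Rightarrow> nat \<Rightarrow> ('w \<Rightarrow> nat \<Rightarrow> real) \<Rightarrow> nat \<Rightarrow> ennreal" where
  "qerr_sq M l Y k = (INF \<alpha>\<in>{\<alpha>. finite \<alpha> \<and> card \<alpha> \<le> k}. qdistortion M l Y \<alpha>)"

definition L2_optimal_quantizer ::
  "'w measure \<Rightarrow> nat \<Rightarrow> ('w \<Rightarrow> nat \<Rightarrow> real) \<Rightarrow> nat \<Rightarrow> (nat \<Rightarrow> real) set \<Rightarrow> bool" where
  "L2_optimal_quantizer M l Y k \<alpha> \<longleftrightarrow>
     finite \<alpha> \<and> card \<alpha> \<le> k \<and> qdistortion M l Y \<alpha> = qerr_sq M l Y k"

definition borel_l :: "nat \<Rightarrow> (nat \<Rightarrow> real) measure" where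
  "borel_l l = PiM {..<l} (\<lambda>_. lborel)"

definition std_gauss_l :: "nat \<Rightarrow> (nat \<Rightarrow> real) measure" where
  "std_gauss_l l = PiM {..<l} (\<lambda>_. density lborel (\<lambda>x. ennreal (std_normal_density x)))"

definition voronoi_partition :: "nat \<Rightarrow> (nat \<Rightarrow> real) set \<Rightarrow> ((nat \<Rightarrow> real) \<Rightarrow> (nat \<Rightarrow> real) set) \<Rightarrow> bool" where
  "voronoi_partition l \<alpha> C \<longleftrightarrow>
     (\<forall>b\<in>\<alpha>. C b \<in> sets (borel_l l)) \<and>
     disjoint_family_on C \<alpha> \<and>
     (\<Union>b\<in>\<alpha>. C b) = space (borel_l l) \<and>
     (\<forall>b\<in>\<alpha>. C b \<subseteq> {x. \<forall>c\<in>\<alpha>. sqdist_l l x b \<le> sqdist_l l x c})"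

definition voronoi_quant :: "(nat \<Rightarrow> real) set \<Rightarrow> ((nat \<Rightarrow> real) \<Rightarrow> (nat \<Rightarrow> real) set) \<Rightarrow> (nat \<Rightarrow> real) \<Rightarrow> nat \<Rightarrow> real" where
  "voronoi_quant \<alpha> C y = (\<lambda>k. \<Sum>b\<in>\<alpha>. indicator (C b) y * b k)"

definition centered_gaussian :: "'w measure \<Rightarrow> ('w \<Rightarrow> 'h::real_inner) \<Rightarrow> bool" where
  "centered_gaussian M X \<longleftrightarrow>
     (\<forall>y. (\<exists>\<sigma>>0. distributed M lborel (\<lambda>w. y \<bullet> X w) (\<lambda>x. ennreal (normal_density 0 \<sigma> x)))
          \<or> (AE w in M. y \<bullet> X w = 0))"

definition cov_op :: "'w measure \<Rightarrow> ('w \<Rightarrow> 'h::{real_inner,banach,second_countable_topology}) \<Rightarrow> 'h \<Rightarrow> 'h" where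
  "cov_op M X y = (\<integral> w. (y \<bullet> X w) *\<^sub>R X w \<partial>M)"

end

(*
  Almost surely X is the sum of its expansion in the eigenvectors u_i: the residual of the
  expansion is orthogonal to every u_i, hence has zero variance against X. By Parseval,
  |X - Xhat|^2 then splits into the block errors
  sum_k lambda_((j-1)l+k) (Z^(j)_k - Zhat^(j)_k)^2 and the tail sum_(i>ml) <X,u_i>^2, whose
  expectation is sum_(i>ml) lambda_i. As the eigenvalues decrease, block j contributes at
  most lambda_((j-1)l+1) E|Z^(j) - Zhat^(j)|^2, with equality if lambda is constant on the
  block. A Voronoi quantization realises the distance to its codebook, and Z^(j) has the
  characteristic function, hence the law, of N(0, I_l); by optimality of alpha_j the block
  error is therefore e_(n_j)(N(0, I_l))^2.
*)
theory Submission
  imports Defs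
begin

section \<open>Uniqueness of finite-dimensional laws via characteristic functions\<close>

lemma integrable_mult_indicator_comp:
  fixes g :: "'a \<Rightarrow> 'b::{real_normed_field,banach,second_countable_topology}"
  assumes g: "integrable M g" and Y: "Y \<in> M \<rightarrow>\<^sub>M N" and A: "A \<in> sets N"
  shows "integrable M (\<lambda>w. g w * indicator A (Y w))"
proof (rule Bochner_Integration.integrable_bound[OF g])
  show "(\<lambda>w. g w * indicator A (Y w)) \<in> borel_measurable M"
    using g Y A by (intro borel_measurable_times measurable_compose[OF Y borel_measurable_indicator]) auto
  show "AE w in M. norm (g w * indicator A (Y w)) \<le> norm (g w)"
    by (intro AE_I2) (simp add: indicator_def)
qed

lemma integral_indicator_eq_0_sigma_sets:
  fixes g :: "'a \<Rightarrow> complex"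
  assumes Y: "Y \<in> M \<rightarrow>\<^sub>M N" and g: "integrable M g"
    and sets_N: "sets N = sigma_sets (space N) G" and G: "Int_stable G" "G \<subseteq> Pow (space N)"
    and zero_on_G: "\<And>A. A \<in> G \<Longrightarrow> (\<integral>w. g w * indicator A (Y w) \<partial>M) = 0"
    and zero_total: "(\<integral>w. g w \<partial>M) = 0"
    and A: "A \<in> sets N"
  shows "(\<integral>w. g w * indicator A (Y w) \<partial>M) = 0"
proof -
  have "A \<in> sigma_sets (space N) G" using A sets_N by simp
  from G(1,2) this show ?thesis
  proof (induction rule: sigma_sets_induct_disjoint)
    case (basic A)
    then show ?case by (rule zero_on_G)
  next
    case empty
    then show ?case by simp
  next
    case (compl A)
    have A: "A \<in> sets N" using compl.hyps sets_N by simp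
    have "(\<integral>w. g w * indicator (space N - A) (Y w) \<partial>M) = (\<integral>w. g w - g w * indicator A (Y w) \<partial>M)"
      using measurable_space[OF Y] by (intro Bochner_Integration.integral_cong) (auto simp: indicator_def)
    also have "\<dots> = 0"
      using zero_total compl.IH integrable_mult_indicator_comp[OF g Y A] g by simp
    finally show ?case .
  next
    case (union F)
    have F: "Y -` F i \<inter> space M \<in> sets M" for i
      using union.hyps(2) sets_N Y by (auto intro: measurable_sets)
    have int_F: "(LINT w:(Y -` F i \<inter> space M)|M. g w) = (\<integral>w. g w * indicator (F i) (Y w) \<partial>M)" for i
      unfolding set_lebesgue_integral_def
      by (intro Bochner_Integration.integral_cong) (auto simp: indicator_def)
    have "(\<integral>w. g w * indicator (\<Union>i. F i) (Y w) \<partial>M) = (LINT w:(\<Union>i. Y -` F i \<inter> space M)|M. g w)"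
      unfolding set_lebesgue_integral_def
      by (intro Bochner_Integration.integral_cong) (auto simp: indicator_def)
    also have "\<dots> = (\<Sum>i. LINT w:(Y -` F i \<inter> space M)|M. g w)"
    proof (rule lebesgue_integral_countable_add[OF F])
      show "(Y -` F i \<inter> space M) \<inter> (Y -` F j \<inter> space M) = {}" if "i \<noteq> j" for i j
        using union.hyps(1) that by (auto simp: disjoint_family_on_def)
      have "(\<Union>i. Y -` F i \<inter> space M) \<in> sets M"
        using F by (intro sets.countable_UN) auto
      then show "set_integrable M (\<Union>i. Y -` F i \<inter> space M) g"
        using g unfolding set_integrable_def by (rule integrable_mult_indicator)
    qed
    also have "\<dots> = 0"
      using union.IH by (simp add: int_F)
    finally show ?case .
  qed
qed

lemma real_distribution_normalized_density:
  fixes Z g :: "'a \<Rightarrow> real"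
  assumes [measurable]: "Z \<in> borel_measurable M"
    and g: "integrable M g" "\<And>w. 0 \<le> g w" and c: "(\<integral>w. g w \<partial>M) = c" "c > 0"
  shows "real_distribution (distr (density M (\<lambda>w. ennreal (g w / c))) borel Z)"
proof -
  have [measurable]: "g \<in> borel_measurable M" using g by auto
  have "emeasure (density M (\<lambda>w. ennreal (g w / c))) (space M) = (\<integral>\<^sup>+w. ennreal (g w / c) \<partial>M)"
    by (subst emeasure_density) auto
  also have "\<dots> = ennreal (\<integral>w. g w / c \<partial>M)"
    using g c by (intro nn_integral_eq_integral) auto
  also have "\<dots> = 1" using c by simp
  finally have "prob_space (density M (\<lambda>w. ennreal (g w / c)))"
    by (intro prob_spaceI) auto
  then show ?thesis
    unfolding real_distribution_def real_distribution_axioms_def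
    by (auto intro: prob_space.prob_space_distr)
qed

lemma integral_distr_normalized_density:
  fixes Z g :: "'a \<Rightarrow> real" and f :: "real \<Rightarrow> 'b::{banach,second_countable_topology}"
  assumes [measurable]: "Z \<in> borel_measurable M" "g \<in> borel_measurable M" "f \<in> borel_measurable borel"
    and "\<And>w. 0 \<le> g w" "c > 0"
  shows "(\<integral>x. f x \<partial>distr (density M (\<lambda>w. ennreal (g w / c))) borel Z) = (\<integral>w. (g w / c) *\<^sub>R f (Z w) \<partial>M)"
  using assms by (subst integral_distr) (auto simp: integral_density)

text \<open>Normalised to probability densities, \<open>g\<^sub>1\<close> and \<open>g\<^sub>2\<close> push forward along
  \<open>Z\<close> to laws with the same characteristic function, which Levy's theorem identifies.\<close>
lemma integral_indicator_eq_of_char_eq_nonneg: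
  fixes Z g\<^sub>1 g\<^sub>2 :: "'a \<Rightarrow> real"
  assumes [measurable]: "Z \<in> borel_measurable M"
    and g: "integrable M g\<^sub>1" "integrable M g\<^sub>2" "\<And>w. 0 \<le> g\<^sub>1 w" "\<And>w. 0 \<le> g\<^sub>2 w"
    and char_eq: "\<And>s. (\<integral>w. complex_of_real (g\<^sub>1 w) * iexp (s * Z w) \<partial>M)
      = (\<integral>w. complex_of_real (g\<^sub>2 w) * iexp (s * Z w) \<partial>M)"
    and [measurable]: "E \<in> sets borel"
  shows "(\<integral>w. g\<^sub>1 w * indicator E (Z w) \<partial>M) = (\<integral>w. g\<^sub>2 w * indicator E (Z w) \<partial>M)"
proof -
  have [measurable]: "g\<^sub>1 \<in> borel_measurable M" "g\<^sub>2 \<in> borel_measurable M" using g by auto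
  define c where "c = (\<integral>w. g\<^sub>1 w \<partial>M)"
  have c_g\<^sub>2: "(\<integral>w. g\<^sub>2 w \<partial>M) = c"
    using char_eq[of 0] unfolding c_def by simp
  have "0 \<le> c"
    unfolding c_def using g(3) by (simp add: integral_nonneg)
  then consider "c = 0" | "c > 0" by fastforce
  then show ?thesis
  proof cases
    case 1
    then have "(\<integral>w. g\<^sub>1 w \<partial>M) = 0" "(\<integral>w. g\<^sub>2 w \<partial>M) = 0"
      using c_g\<^sub>2 unfolding c_def by simp_all
    then have "AE w in M. g\<^sub>1 w = 0" "AE w in M. g\<^sub>2 w = 0"
      using g by (simp_all add: integral_nonneg_eq_0_iff_AE)
    then show ?thesis
      by (intro integral_cong_AE) (auto elim: AE_mp)
  next
    case 2
    define D where "D g = distr (density M (\<lambda>w. ennreal (g w / c))) borel Z" for g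
    have char_D: "char (D g) s = complex_of_real (1/c) * (\<integral>w. complex_of_real (g w) * iexp (s * Z w) \<partial>M)"
      if [measurable]: "g \<in> borel_measurable M" and "\<And>w. 0 \<le> g w" for g s
    proof -
      have "char (D g) s = (\<integral>w. complex_of_real (1/c) * (complex_of_real (g w) * iexp (s * Z w)) \<partial>M)"
        unfolding char_def D_def using that 2
        by (subst integral_distr_normalized_density)
          (auto simp: scaleR_conv_of_real intro!: Bochner_Integration.integral_cong)
      then show ?thesis by simp
    qed
    have "char (D g\<^sub>1) s = char (D g\<^sub>2) s" for s
      using char_D[of g\<^sub>1 s] char_D[of g\<^sub>2 s] char_eq[of s] g by simp
    then have "D g\<^sub>1 = D g\<^sub>2"
      unfolding D_def using g c_g\<^sub>2 2 unfolding c_def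
      by (intro Levy_uniqueness real_distribution_normalized_density) auto
    then have "(\<integral>x. (indicator E x :: real) \<partial>D g\<^sub>1) = (\<integral>x. indicator E x \<partial>D g\<^sub>2)"
      by simp
    then have "(\<integral>w. (g\<^sub>1 w / c) *\<^sub>R (indicator E (Z w) :: real) \<partial>M)
        = (\<integral>w. (g\<^sub>2 w / c) *\<^sub>R (indicator E (Z w) :: real) \<partial>M)"
      unfolding D_def using g 2 by (subst (asm) (1 2) integral_distr_normalized_density) auto
    then show ?thesis using 2 by simp
  qed
qed

lemma integral_indicator_eq_0_of_char_eq_0_real:
  fixes h Z :: "'a \<Rightarrow> real"
  assumes Z[measurable]: "Z \<in> borel_measurable M" and h: "integrable M h"
    and char_0: "\<And>s. (\<integral>w. complex_of_real (h w) * iexp (s * Z w) \<partial>M) = 0"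
    and E[measurable]: "E \<in> sets borel"
  shows "(\<integral>w. h w * indicator E (Z w) \<partial>M) = 0"
proof -
  define hp where "hp w = max 0 (h w)" for w
  define hn where "hn w = max 0 (- h w)" for w
  have int_pn: "integrable M hp" "integrable M hn"
    unfolding hp_def hn_def using h by auto
  have h_eq: "h w = hp w - hn w" for w unfolding hp_def hn_def by auto
  have pn_nonneg: "0 \<le> hp w" "0 \<le> hn w" for w unfolding hp_def hn_def by auto
  have int_iexp: "integrable M (\<lambda>w. complex_of_real (f w) * iexp (s * Z w))"
    if "integrable M f" for f s
    by (rule Bochner_Integration.integrable_bound[where f=f]) (use that in \<open>auto simp: norm_mult\<close>)
  have "(\<integral>w. complex_of_real (hp w) * iexp (s * Z w) \<partial>M)
      = (\<integral>w. complex_of_real (hn w) * iexp (s * Z w) \<partial>M)" for s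
  proof -
    have "(\<integral>w. complex_of_real (hp w) * iexp (s * Z w) \<partial>M)
          - (\<integral>w. complex_of_real (hn w) * iexp (s * Z w) \<partial>M)
        = (\<integral>w. complex_of_real (h w) * iexp (s * Z w) \<partial>M)"
      using int_iexp int_pn
      by (subst Bochner_Integration.integral_diff[symmetric]) (auto simp: h_eq algebra_simps)
    then show ?thesis using char_0[of s] by simp
  qed
  then have "(\<integral>w. hp w * indicator E (Z w) \<partial>M) = (\<integral>w. hn w * indicator E (Z w) \<partial>M)"
    using int_pn pn_nonneg by (intro integral_indicator_eq_of_char_eq_nonneg) auto
  moreover have "(\<integral>w. h w * indicator E (Z w) \<partial>M)
      = (\<integral>w. hp w * indicator E (Z w) \<partial>M) - (\<integral>w. hn w * indicator E (Z w) \<partial>M)"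
    using integrable_mult_indicator_comp[OF int_pn(1) Z E] integrable_mult_indicator_comp[OF int_pn(2) Z E]
    by (subst Bochner_Integration.integral_diff[symmetric]) (auto simp: h_eq algebra_simps)
  ultimately show ?thesis by simp
qed

lemma integral_indicator_eq_0_of_char_eq_0_Re:
  fixes Z :: "'a \<Rightarrow> real" and h :: "'a \<Rightarrow> complex"
  assumes Z[measurable]: "Z \<in> borel_measurable M" and h: "integrable M h"
    and char_0: "\<And>s. (\<integral>w. h w * iexp (s * Z w) \<partial>M) = 0"
    and E[measurable]: "E \<in> sets borel"
  shows "(\<integral>w. Re (h w) * indicator E (Z w) \<partial>M) = 0"
proof (rule integral_indicator_eq_0_of_char_eq_0_real[OF Z _ _ E])
  show "integrable M (\<lambda>w. Re (h w))" using h by auto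
  have int_iexp: "integrable M (\<lambda>w. h w * iexp (s * Z w))" for s
    by (rule Bochner_Integration.integrable_bound[OF h]) (use h in \<open>auto simp: norm_mult\<close>)
  fix s
  have Re_iexp: "complex_of_real (Re (h w)) * iexp (s * Z w)
      = (h w * iexp (s * Z w) + cnj (h w * iexp (-s * Z w))) / 2" for w
  proof -
    have "cnj (iexp (-s * Z w)) = iexp (s * Z w)"
      by (subst exp_cnj) simp
    moreover have "complex_of_real (Re (h w)) = (h w + cnj (h w)) / 2"
      by (simp add: complex_add_cnj)
    ultimately show ?thesis
      by (simp only: complex_cnj_mult) (simp add: field_simps)
  qed
  have "(\<integral>w. complex_of_real (Re (h w)) * iexp (s * Z w) \<partial>M)
      = (\<integral>w. (h w * iexp (s * Z w) + cnj (h w * iexp (-s * Z w))) / 2 \<partial>M)"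
    by (intro Bochner_Integration.integral_cong refl Re_iexp)
  also have "\<dots> = (\<integral>w. h w * iexp (s * Z w) + cnj (h w * iexp (-s * Z w)) \<partial>M) / 2"
    by (rule integral_divide_zero)
  also have "\<dots> = ((\<integral>w. h w * iexp (s * Z w) \<partial>M) + cnj (\<integral>w. h w * iexp (-s * Z w) \<partial>M)) / 2"
    using int_iexp[of s] integrable_cnj[OF int_iexp[of "-s"]]
      Bochner_Integration.integral_cnj[of M "\<lambda>w. h w * iexp (-s * Z w)"]
    by (subst Bochner_Integration.integral_add) auto
  also have "\<dots> = 0" using char_0[of s] char_0[of "-s"] by simp
  finally show "(\<integral>w. complex_of_real (Re (h w)) * iexp (s * Z w) \<partial>M) = 0" .
qed

lemma integral_indicator_eq_0_of_char_eq_0: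
  fixes Z :: "'a \<Rightarrow> real" and h :: "'a \<Rightarrow> complex"
  assumes Z[measurable]: "Z \<in> borel_measurable M" and h: "integrable M h"
    and char_0: "\<And>s. (\<integral>w. h w * iexp (s * Z w) \<partial>M) = 0"
    and E[measurable]: "E \<in> sets borel"
  shows "(\<integral>w. h w * indicator E (Z w) \<partial>M) = 0"
proof -
  have Re_0: "(\<integral>w. Re (h w) * indicator E (Z w) \<partial>M) = 0"
    by (rule integral_indicator_eq_0_of_char_eq_0_Re[OF Z h char_0 E])
  have Im_0: "(\<integral>w. Im (h w) * indicator E (Z w) \<partial>M) = 0"
  proof -
    have "(\<integral>w. Re (- \<i> * h w) * indicator E (Z w) \<partial>M) = 0"
    proof (rule integral_indicator_eq_0_of_char_eq_0_Re[OF Z _ _ E])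
      show "integrable M (\<lambda>w. - \<i> * h w)" using h by auto
      show "(\<integral>w. - \<i> * h w * iexp (s * Z w) \<partial>M) = 0" for s
        using char_0[of s] by (simp add: mult.assoc)
    qed
    then show ?thesis by simp
  qed
  have int_Re: "integrable M (\<lambda>w. Re (h w) * indicator E (Z w))"
    using integrable_mult_indicator_comp[of M "\<lambda>w. Re (h w)", OF _ Z E] h by auto
  have int_Im: "integrable M (\<lambda>w. Im (h w) * indicator E (Z w))"
    using integrable_mult_indicator_comp[of M "\<lambda>w. Im (h w)", OF _ Z E] h by auto
  have "(\<integral>w. h w * indicator E (Z w) \<partial>M)
     = (\<integral>w. complex_of_real (Re (h w) * indicator E (Z w)) + \<i> * complex_of_real (Im (h w) * indicator E (Z w)) \<partial>M)"
    by (intro Bochner_Integration.integral_cong) (auto simp: complex_eq_iff indicator_def)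
  also have "\<dots> = complex_of_real (\<integral>w. Re (h w) * indicator E (Z w) \<partial>M)
        + \<i> * complex_of_real (\<integral>w. Im (h w) * indicator E (Z w) \<partial>M)"
    using int_Re int_Im
    by (subst Bochner_Integration.integral_add)
      (auto simp only: complex_of_real_integrable_eq integrable_mult_right
        integral_mult_right_zero integral_complex_of_real)
  finally show ?thesis using Re_0 Im_0 by simp
qed

lemma indicator_PiE_insert:
  assumes "x \<in> extensional (insert i I)" "i \<notin> I"
  shows "(indicator (Pi\<^sub>E (insert i I) E) x :: 'c::comm_ring_1)
    = indicator (Pi\<^sub>E I E) (restrict x I) * indicator (E i) (x i)"
proof -
  have "x \<in> Pi\<^sub>E (insert i I) E \<longleftrightarrow> x i \<in> E i \<and> restrict x I \<in> Pi\<^sub>E I E"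
    using assms by (auto simp: PiE_def Pi_def extensional_def)
  then show ?thesis by (simp add: indicator_def)
qed

text \<open>Induction on the coordinates: with the weight \<open>g w * iexp (s * Y w i)\<close>, the
  induction hypothesis annihilates the boxes \<open>B\<close> in the remaining coordinates, and then
  the one-dimensional case with the weight \<open>g w * indicator B (restrict (Y w) I)\<close>
  annihilates \<open>B \<times> E\<close>.\<close>
lemma integral_indicator_eq_0_of_char_eq_0_PiM:
  fixes Y :: "'a \<Rightarrow> 'i \<Rightarrow> real" and g :: "'a \<Rightarrow> complex"
  assumes "finite I"
    and "Y \<in> M \<rightarrow>\<^sub>M PiM I (\<lambda>_. lborel)" and "integrable M g"
    and "\<And>t. (\<integral>w. g w * iexp (\<Sum>k\<in>I. t k * Y w k) \<partial>M) = 0"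
    and "A \<in> sets (PiM I (\<lambda>_. lborel))"
  shows "(\<integral>w. g w * indicator A (Y w) \<partial>M) = 0"
  using assms
proof (induction I arbitrary: M Y g A rule: finite_induct)
  case empty
  have "Y w = (\<lambda>_. undefined)" if "w \<in> space M" for w
    using measurable_space[OF empty.prems(1) that] by (simp add: space_PiM_empty)
  moreover have "(\<integral>w. g w \<partial>M) = 0"
    using empty.prems(3)[of "\<lambda>_. 0"] by simp
  moreover have "A = {} \<or> A = {\<lambda>_. undefined}"
    using empty.prems(4) by (simp add: sets_PiM_empty)
  ultimately show ?case
    by (auto intro: trans[OF Bochner_Integration.integral_cong[OF refl]])
next
  case (insert i I)
  note Y = insert.prems(1) and g = insert.prems(2) and char_0 = insert.prems(3)
  define YI where "YI w = restrict (Y w) I" for w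
  have YI: "YI \<in> M \<rightarrow>\<^sub>M PiM I (\<lambda>_. lborel)"
    unfolding YI_def by (rule measurable_compose[OF Y measurable_restrict_subset]) auto
  have [measurable]: "(\<lambda>w. Y w i) \<in> borel_measurable M"
    using measurable_compose[OF Y measurable_component_singleton[of i]] by simp
  have [measurable]: "g \<in> borel_measurable M" using g by auto
  have box_I: "(\<integral>w. (g w * iexp (s * Y w i)) * indicator B (YI w) \<partial>M) = 0"
    if B: "B \<in> sets (PiM I (\<lambda>_. lborel))" for s B
  proof (rule insert.IH[OF YI _ _ B])
    show "integrable M (\<lambda>w. g w * iexp (s * Y w i))"
      by (rule Bochner_Integration.integrable_bound[OF g]) (auto simp: norm_mult)
    fix t
    have "(\<Sum>k\<in>insert i I. (t(i:=s)) k * Y w k) = s * Y w i + (\<Sum>k\<in>I. t k * YI w k)" for w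
      using insert.hyps by (simp add: YI_def) (intro sum.cong, auto)
    then show "(\<integral>w. g w * iexp (s * Y w i) * iexp (\<Sum>k\<in>I. t k * YI w k) \<partial>M) = 0"
      using char_0[of "t(i:=s)"] by (simp add: distrib_left exp_add mult.assoc)
  qed
  have box: "(\<integral>w. (g w * indicator B (YI w)) * indicator E (Y w i) \<partial>M) = 0"
    if B: "B \<in> sets (PiM I (\<lambda>_. lborel))" and E: "E \<in> sets borel" for E B
  proof (rule integral_indicator_eq_0_of_char_eq_0[OF _ integrable_mult_indicator_comp[OF g YI B] _ E])
    show "(\<integral>w. g w * indicator B (YI w) * iexp (s * Y w i) \<partial>M) = 0" for s
      using box_I[OF B, of s] by (simp add: mult_ac)
  qed simp
  show ?case
  proof (rule integral_indicator_eq_0_sigma_sets[OF Y g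
        sets_PiM[folded space_PiM] Int_stable_prod_algebra
        prod_algebra_sets_into_space[folded space_PiM] _ _ insert.prems(4)])
    show "(\<integral>w. g w \<partial>M) = 0"
      using char_0[of "\<lambda>_. 0"] by simp
    fix X assume "X \<in> prod_algebra (insert i I) (\<lambda>_. lborel :: real measure)"
    then obtain E where X: "X = Pi\<^sub>E (insert i I) E" and E: "E \<in> (\<Pi> k\<in>insert i I. sets borel)"
      by (auto elim: prod_algebraE_all)
    have B: "Pi\<^sub>E I E \<in> sets (PiM I (\<lambda>_. lborel))"
      using E by (intro sets_PiM_I_finite) (auto simp: insert.hyps)
    have "(\<integral>w. g w * indicator X (Y w) \<partial>M)
        = (\<integral>w. (g w * indicator (Pi\<^sub>E I E) (YI w)) * indicator (E i) (Y w i) \<partial>M)"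
    proof (intro Bochner_Integration.integral_cong refl)
      fix w assume "w \<in> space M"
      then have "Y w \<in> extensional (insert i I)"
        using measurable_space[OF Y] by (auto simp: space_PiM PiE_def)
      then show "g w * indicator X (Y w) = (g w * indicator (Pi\<^sub>E I E) (YI w)) * indicator (E i) (Y w i)"
        using insert.hyps by (simp add: X YI_def indicator_PiE_insert mult.assoc)
    qed
    also have "\<dots> = 0" using E by (intro box[OF B]) auto
    finally show "(\<integral>w. g w * indicator X (Y w) \<partial>M) = 0" .
  qed
qed

lemma distr_eq_of_integral_indicator_eq:
  fixes V :: "'a \<Rightarrow> 'b"
  assumes "prob_space M" "prob_space G" and V: "V \<in> M \<rightarrow>\<^sub>M L" and sets_G: "sets G = sets L"
    and indicator_eq: "\<And>A. A \<in> sets L \<Longrightarrow> (\<integral>w. indicator A (V w) \<partial>M) = (\<integral>x. (indicator A x :: real) \<partial>G)"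
  shows "distr M L V = G"
proof (rule measure_eqI)
  interpret M: prob_space M by fact
  interpret G: prob_space G by fact
  show "sets (distr M L V) = sets G" using sets_G by simp
  fix A assume "A \<in> sets (distr M L V)"
  then have A: "A \<in> sets L" by simp
  then have "V -` A \<inter> space M \<in> sets M"
    by (rule measurable_sets[OF V])
  moreover have "(\<integral>w. indicator A (V w) \<partial>M) = (\<integral>w. (indicator (V -` A \<inter> space M) w :: real) \<partial>M)"
    by (intro Bochner_Integration.integral_cong) (auto simp: indicator_def)
  ultimately have "measure M (V -` A \<inter> space M) = measure G A"
    using indicator_eq[OF A] A sets_G by (simp add: M.emeasure_eq_measure)
  then show "emeasure (distr M L V) A = emeasure G A"
    using A V sets_G by (simp add: emeasure_distr M.emeasure_eq_measure G.emeasure_eq_measure)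
qed

lemma measurable_coupling:
  assumes V: "V \<in> M \<rightarrow>\<^sub>M L" and sets_G: "sets G = sets L"
  shows "(\<lambda>z. if snd z then V (fst (fst z)) else snd (fst z)) \<in> (M \<Otimes>\<^sub>M G) \<Otimes>\<^sub>M count_space UNIV \<rightarrow>\<^sub>M L"
proof (rule measurable_If)
  have "measurable (M \<Otimes>\<^sub>M G) G = measurable (M \<Otimes>\<^sub>M G) L"
    by (rule measurable_cong_sets) (auto simp: sets_G)
  then show "(\<lambda>z. snd (fst z)) \<in> (M \<Otimes>\<^sub>M G) \<Otimes>\<^sub>M count_space UNIV \<rightarrow>\<^sub>M L"
    using measurable_snd[of M G] by (intro measurable_compose[OF measurable_fst]) auto
  show "(\<lambda>z. V (fst (fst z))) \<in> (M \<Otimes>\<^sub>M G) \<Otimes>\<^sub>M count_space UNIV \<rightarrow>\<^sub>M L"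
    by (intro measurable_compose[OF measurable_fst] measurable_compose[OF measurable_fst V])
  have "{z \<in> space ((M \<Otimes>\<^sub>M G) \<Otimes>\<^sub>M count_space UNIV). snd z} = space (M \<Otimes>\<^sub>M G) \<times> {True}"
    by (auto simp: space_pair_measure)
  then show "{z \<in> space ((M \<Otimes>\<^sub>M G) \<Otimes>\<^sub>M count_space UNIV). snd z} \<in> sets ((M \<Otimes>\<^sub>M G) \<Otimes>\<^sub>M count_space UNIV)"
    by auto
qed

text \<open>On \<open>(M \<Otimes>\<^sub>M G) \<Otimes>\<^sub>M bool\<close>, the coupling point reads off \<open>V\<close> on the
  \<open>True\<close> half and the \<open>G\<close>-point on the \<open>False\<close> half, so integrating against the
  sign computes the difference of the two laws.\<close>
lemma integral_sign_coupling:
  fixes f :: "'b \<Rightarrow> complex"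
  assumes "prob_space M" "prob_space G" and V: "V \<in> M \<rightarrow>\<^sub>M L" and sets_G: "sets G = sets L"
    and f: "f \<in> borel_measurable L" and f_le: "\<And>x. norm (f x) \<le> 1"
  shows "(\<integral>z. (if snd z then 1 else -1) * f (if snd z then V (fst (fst z)) else snd (fst z))
      \<partial>(M \<Otimes>\<^sub>M G) \<Otimes>\<^sub>M count_space UNIV) = (\<integral>w. f (V w) \<partial>M) - (\<integral>x. f x \<partial>G)"
proof -
  interpret M: prob_space M by fact
  interpret G: prob_space G by fact
  interpret P: prob_space "M \<Otimes>\<^sub>M G" by (intro prob_space_pair) fact+
  interpret PB: pair_sigma_finite "M \<Otimes>\<^sub>M G" "count_space (UNIV :: bool set)"
    unfolding pair_sigma_finite_def
    by (auto intro: P.sigma_finite_measure sigma_finite_measure_count_space_finite)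
  interpret MG: pair_sigma_finite M G
    unfolding pair_sigma_finite_def by (auto intro: M.sigma_finite_measure G.sigma_finite_measure)
  have "snd \<in> M \<Otimes>\<^sub>M G \<rightarrow>\<^sub>M L"
    using measurable_snd[of M G] unfolding measurable_cong_sets[OF refl sets_G] .
  then have [measurable]: "(\<lambda>p. f (V (fst p))) \<in> borel_measurable (M \<Otimes>\<^sub>M G)" "(\<lambda>p. f (snd p)) \<in> borel_measurable (M \<Otimes>\<^sub>M G)"
    using measurable_compose[OF measurable_compose[OF measurable_fst V] f] measurable_compose[OF _ f]
    by blast+
  have int_P: "integrable (M \<Otimes>\<^sub>M G) (\<lambda>p. f (V (fst p)))" "integrable (M \<Otimes>\<^sub>M G) (\<lambda>p. f (snd p))"
    by (rule P.integrable_const_bound[where B=1]; simp add: f_le)+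
  let ?c = "\<lambda>z. if snd z then V (fst (fst z)) else snd (fst z)"
  interpret N: finite_measure "(M \<Otimes>\<^sub>M G) \<Otimes>\<^sub>M count_space (UNIV :: bool set)"
  proof (rule finite_measure_pair_measure)
    show "finite_measure (M \<Otimes>\<^sub>M G)"
      using prob_space_pair[OF assms(1,2)] unfolding prob_space_def by blast
  qed (auto intro: finite_measure_count_space)
  have "integrable ((M \<Otimes>\<^sub>M G) \<Otimes>\<^sub>M count_space UNIV) (\<lambda>z. (if snd z then 1 else -1) * f (?c z))"
  proof (rule N.integrable_const_bound[where B=1])
    show "AE z in (M \<Otimes>\<^sub>M G) \<Otimes>\<^sub>M count_space UNIV. norm ((if snd z then 1 else -1) * f (?c z)) \<le> 1"
      using f_le by (simp add: norm_mult)
    show "(\<lambda>z. (if snd z then 1 else -1) * f (?c z)) \<in> borel_measurable ((M \<Otimes>\<^sub>M G) \<Otimes>\<^sub>M count_space UNIV)"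
      using measurable_compose[OF measurable_coupling[OF V sets_G] f] by measurable
  qed
  then have "(\<integral>z. (if snd z then 1 else -1) * f (?c z) \<partial>(M \<Otimes>\<^sub>M G) \<Otimes>\<^sub>M count_space UNIV)
      = (\<integral>p. (\<integral>b. (if snd (p, b) then 1 else -1) * f (?c (p, b)) \<partial>count_space UNIV) \<partial>M \<Otimes>\<^sub>M G)"
    by (rule PB.integral_fst'[symmetric])
  also have "\<dots> = (\<integral>p. f (V (fst p)) - f (snd p) \<partial>M \<Otimes>\<^sub>M G)"
    by (simp add: lebesgue_integral_count_space_finite UNIV_bool)
  also have "\<dots> = (\<integral>p. f (V (fst p)) \<partial>M \<Otimes>\<^sub>M G) - (\<integral>p. f (snd p) \<partial>M \<Otimes>\<^sub>M G)"
    by (rule Bochner_Integration.integral_diff[OF int_P])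
  also have "\<dots> = (\<integral>w. f (V w) \<partial>M) - (\<integral>x. f x \<partial>G)"
    using MG.integral_fst'[OF int_P(1)] MG.integral_fst'[OF int_P(2)]
    by (simp add: M.prob_space G.prob_space)
  finally show ?thesis .
qed

lemma distr_PiM_eq_of_char_eq:
  fixes V :: "'a \<Rightarrow> 'i \<Rightarrow> real" and G :: "('i \<Rightarrow> real) measure"
  assumes fin: "finite I" and "prob_space M" and "prob_space G"
    and V: "V \<in> M \<rightarrow>\<^sub>M PiM I (\<lambda>_. lborel)"
    and sets_G: "sets G = sets (PiM I (\<lambda>_. lborel))"
    and char_eq: "\<And>t. (\<integral>w. iexp (\<Sum>k\<in>I. t k * V w k) \<partial>M) = (\<integral>x. iexp (\<Sum>k\<in>I. t k * x k) \<partial>G)"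
  shows "distr M (PiM I (\<lambda>_. lborel)) V = G"
proof (rule distr_eq_of_integral_indicator_eq[OF assms(2,3) V sets_G])
  define N where "N = (M \<Otimes>\<^sub>M G) \<Otimes>\<^sub>M count_space (UNIV :: bool set)"
  define Y where "Y z = (if snd z then V (fst (fst z)) else snd (fst z))" for z :: "('a \<times> ('i \<Rightarrow> real)) \<times> bool"
  define h where "h z = (if snd z then 1 else -1 :: complex)" for z :: "('a \<times> ('i \<Rightarrow> real)) \<times> bool"
  have Y: "Y \<in> N \<rightarrow>\<^sub>M PiM I (\<lambda>_. lborel)"
    unfolding Y_def N_def by (rule measurable_coupling[OF V sets_G])
  have integral_h: "(\<integral>z. h z * f (Y z) \<partial>N) = (\<integral>w. f (V w) \<partial>M) - (\<integral>x. f x \<partial>G)"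
    if "f \<in> borel_measurable (PiM I (\<lambda>_. lborel))" "\<And>x. norm (f x) \<le> 1" for f
    unfolding h_def Y_def N_def using integral_sign_coupling[OF assms(2,3) V sets_G that] by simp
  fix A assume A: "A \<in> sets (PiM I (\<lambda>_. lborel :: real measure))"
  have "(\<integral>z. h z * indicator A (Y z) \<partial>N) = 0"
  proof (rule integral_indicator_eq_0_of_char_eq_0_PiM[OF fin Y _ _ A])
    interpret P: prob_space "M \<Otimes>\<^sub>M G"
      using assms(2,3) by (rule prob_space_pair)
    interpret N: finite_measure N unfolding N_def
      by (rule finite_measure_pair_measure) (auto intro: finite_measureI)
    have "h \<in> borel_measurable N"
      unfolding h_def N_def by measurable
    then show "integrable N h"
      by (intro N.integrable_const_bound[where B=1]) (auto simp: h_def)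
    show "(\<integral>z. h z * iexp (\<Sum>k\<in>I. t k * Y z k) \<partial>N) = 0" for t
      using integral_h[of "\<lambda>x. iexp (\<Sum>k\<in>I. t k * x k)"] char_eq[of t] by (simp add: norm_exp_i_times)
  qed
  then have "(\<integral>w. indicator A (V w) \<partial>M) = (\<integral>x. (indicator A x :: complex) \<partial>G)"
    using integral_h[of "indicator A"] A by (simp add: indicator_def)
  moreover have complex_indicator:
    "(\<integral>x. (indicator A (f x) :: complex) \<partial>K) = complex_of_real (\<integral>x. indicator A (f x) \<partial>K)"
    for K :: "'b measure" and f
    by (subst integral_complex_of_real[symmetric])
      (intro Bochner_Integration.integral_cong refl, simp add: indicator_def)
  ultimately show "(\<integral>w. indicator A (V w) \<partial>M) = (\<integral>x. (indicator A x :: real) \<partial>G)"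
    using complex_indicator[of M V] complex_indicator[of G "\<lambda>x. x"] by simp
qed

lemma char_std_normal_PiM:
  assumes "finite I"
  shows "(\<integral>x. iexp (\<Sum>k\<in>I. t k * x k) \<partial>PiM I (\<lambda>_. std_normal_distribution))
    = complex_of_real (exp (- (\<Sum>k\<in>I. (t k)^2) / 2))"
proof -
  interpret product_sigma_finite "\<lambda>_. std_normal_distribution"
    unfolding product_sigma_finite_def
    by (intro allI prob_space_imp_sigma_finite prob_space_normal_density) simp
  interpret std_normal: prob_space std_normal_distribution
    by (rule prob_space_normal_density) simp
  have "(\<integral>x. iexp (\<Sum>k\<in>I. t k * x k) \<partial>PiM I (\<lambda>_. std_normal_distribution))
      = (\<integral>x. (\<Prod>k\<in>I. iexp (t k * x k)) \<partial>PiM I (\<lambda>_. std_normal_distribution))"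
    using assms by (simp add: sum_distrib_left exp_sum)
  also have "\<dots> = (\<Prod>k\<in>I. \<integral>x. iexp (t k * x) \<partial>std_normal_distribution)"
    using assms
    by (intro product_integral_prod std_normal.integrable_const_bound[where B=1])
      (auto simp: norm_exp_i_times)
  also have "\<dots> = (\<Prod>k\<in>I. complex_of_real (exp (- ((t k)^2) / 2)))"
    using char_std_normal_distribution unfolding char_def by (simp add: fun_eq_iff)
  also have "\<dots> = complex_of_real (exp (\<Sum>k\<in>I. - ((t k)^2) / 2))"
    using assms by (simp add: exp_sum)
  also have "(\<Sum>k\<in>I. - ((t k)^2) / 2) = - (\<Sum>k\<in>I. (t k)^2) / 2"
    by (simp add: sum_negf sum_divide_distrib)
  finally show ?thesis .
qed

section \<open>Orthonormal sequences in a real inner product space\<close>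

definition orthonormal_seq :: "(nat \<Rightarrow> 'h::real_inner) \<Rightarrow> bool" where
  "orthonormal_seq v \<longleftrightarrow> (\<forall>i j. v i \<bullet> v j = (if i = j then 1 else 0))"

lemma inner_sum_orthonormal_seq:
  assumes "orthonormal_seq v" "finite S"
  shows "(\<Sum>i\<in>S. a i *\<^sub>R v i) \<bullet> (\<Sum>i\<in>S. b i *\<^sub>R v i) = (\<Sum>i\<in>S. a i * b i)"
proof -
  have "(\<Sum>i\<in>S. a i *\<^sub>R v i) \<bullet> (\<Sum>j\<in>S. b j *\<^sub>R v j) = (\<Sum>i\<in>S. \<Sum>j\<in>S. a i * b j * (v i \<bullet> v j))"
    by (simp add: inner_sum_left inner_sum_right sum_distrib_left mult_ac)
      (rule sum.swap)
  also have "\<dots> = (\<Sum>i\<in>S. \<Sum>j\<in>S. if i = j then a i * b j else 0)"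
    using assms(1) unfolding orthonormal_seq_def by (intro sum.cong refl) auto
  finally show ?thesis
    using assms(2) by simp
qed

lemma norm_sum_orthonormal_seq:
  assumes "orthonormal_seq v" "finite S"
  shows "(norm (\<Sum>i\<in>S. b i *\<^sub>R v i))\<^sup>2 = (\<Sum>i\<in>S. (b i)\<^sup>2)"
proof -
  have "(norm (\<Sum>i\<in>S. b i *\<^sub>R v i))\<^sup>2 = (\<Sum>i\<in>S. b i *\<^sub>R v i) \<bullet> (\<Sum>i\<in>S. b i *\<^sub>R v i)"
    by (rule power2_norm_eq_inner)
  then show ?thesis
    by (simp add: inner_sum_orthonormal_seq[OF assms] power2_eq_square)
qed

lemma norm_diff_sum_orthonormal_seq:
  assumes "orthonormal_seq v" "finite S"
  shows "(norm (x - (\<Sum>i\<in>S. b i *\<^sub>R v i)))\<^sup>2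
       = (norm x)\<^sup>2 - 2 * (\<Sum>i\<in>S. b i * (x \<bullet> v i)) + (\<Sum>i\<in>S. (b i)\<^sup>2)"
proof -
  let ?s = "\<Sum>i\<in>S. b i *\<^sub>R v i"
  have "(norm (x - ?s))\<^sup>2 = (norm x)\<^sup>2 - 2 * (x \<bullet> ?s) + (norm ?s)\<^sup>2"
    by (simp add: power2_norm_eq_inner inner_diff_left inner_diff_right inner_commute)
  then show ?thesis
    by (simp add: norm_sum_orthonormal_seq[OF assms] inner_sum_right)
qed

lemma bessel_inequality:
  assumes "orthonormal_seq v"
  shows "(\<Sum>i<n. (x \<bullet> v i)\<^sup>2) \<le> (norm x)\<^sup>2"
proof -
  have "(norm (x - (\<Sum>i<n. (x \<bullet> v i) *\<^sub>R v i)))\<^sup>2 = (norm x)\<^sup>2 - (\<Sum>i<n. (x \<bullet> v i)\<^sup>2)"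
    using norm_diff_sum_orthonormal_seq[OF assms, of "{..<n}" x "\<lambda>i. x \<bullet> v i"]
    by (simp add: power2_eq_square)
  then show ?thesis
    using zero_le_power2[of "norm (x - (\<Sum>i<n. (x \<bullet> v i) *\<^sub>R v i))"] by linarith
qed

lemma summable_inner_sq_orthonormal_seq:
  assumes "orthonormal_seq v"
  shows "summable (\<lambda>i. (x \<bullet> v i)\<^sup>2)"
  using bessel_inequality[OF assms] by (intro summableI_nonneg_bounded) auto

lemma summable_scaleR_orthonormal_seq:
  fixes v :: "nat \<Rightarrow> 'h::{real_inner,banach}"
  assumes "orthonormal_seq v" "summable (\<lambda>i. (c i)\<^sup>2)"
  shows "summable (\<lambda>i. c i *\<^sub>R v i)"
  unfolding summable_Cauchy
proof (intro allI impI)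
  fix e :: real assume e: "e > 0"
  from assms(2)[unfolded summable_Cauchy, rule_format, of "e\<^sup>2"] e
  obtain N where N: "\<And>m n. m \<ge> N \<Longrightarrow> norm (\<Sum>i\<in>{m..<n}. (c i)\<^sup>2) < e\<^sup>2" by auto
  have "norm (\<Sum>i\<in>{m..<n}. c i *\<^sub>R v i) < e" if "m \<ge> N" for m n
  proof -
    have "(norm (\<Sum>i\<in>{m..<n}. c i *\<^sub>R v i))\<^sup>2 < e\<^sup>2"
      using N[OF that, of n] by (simp add: norm_sum_orthonormal_seq[OF assms(1)])
    then show ?thesis using e by (simp add: power_less_imp_less_base)
  qed
  then show "\<exists>N. \<forall>m\<ge>N. \<forall>n. norm (\<Sum>i\<in>{m..<n}. c i *\<^sub>R v i) < e" by blast
qed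

definition orthonormal_expansion :: "(nat \<Rightarrow> 'h::{real_inner,banach}) \<Rightarrow> 'h \<Rightarrow> 'h" where
  "orthonormal_expansion v x = (\<Sum>i. (x \<bullet> v i) *\<^sub>R v i)"

lemma orthonormal_expansion_sums:
  fixes v :: "nat \<Rightarrow> 'h::{real_inner,banach}"
  assumes "orthonormal_seq v"
  shows "(\<lambda>i. (x \<bullet> v i) *\<^sub>R v i) sums orthonormal_expansion v x"
  unfolding orthonormal_expansion_def
  by (intro summable_sums summable_scaleR_orthonormal_seq assms summable_inner_sq_orthonormal_seq)

lemma inner_orthonormal_expansion_sums:
  fixes v :: "nat \<Rightarrow> 'h::{real_inner,banach}"
  assumes "orthonormal_seq v"
  shows "(\<lambda>i. (x \<bullet> v i) * (y \<bullet> v i)) sums (y \<bullet> orthonormal_expansion v x)"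
proof -
  have "(\<lambda>i. y \<bullet> ((x \<bullet> v i) *\<^sub>R v i)) sums (y \<bullet> orthonormal_expansion v x)"
    by (rule bounded_linear.sums[OF bounded_linear_inner_right orthonormal_expansion_sums[OF assms]])
  then show ?thesis by (simp add: mult.commute)
qed

lemma inner_orthonormal_expansion_basis:
  fixes v :: "nat \<Rightarrow> 'h::{real_inner,banach}"
  assumes "orthonormal_seq v"
  shows "v j \<bullet> orthonormal_expansion v x = x \<bullet> v j"
proof -
  have "(\<lambda>i. (x \<bullet> v i) * (v j \<bullet> v i)) = (\<lambda>i. if i = j then x \<bullet> v j else 0)"
    using assms unfolding orthonormal_seq_def by (auto simp: fun_eq_iff)
  moreover have "(\<lambda>i. if i = j then x \<bullet> v j else 0) sums (x \<bullet> v j)"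
    by (rule sums_single)
  ultimately show ?thesis
    using inner_orthonormal_expansion_sums[OF assms, of x "v j"] by (metis sums_unique2)
qed

lemma norm_orthonormal_expansion_sums:
  fixes v :: "nat \<Rightarrow> 'h::{real_inner,banach}"
  assumes "orthonormal_seq v"
  shows "(\<lambda>i. (x \<bullet> v i)\<^sup>2) sums (norm (orthonormal_expansion v x))\<^sup>2"
proof -
  have "(\<lambda>n. (norm (\<Sum>i<n. (x \<bullet> v i) *\<^sub>R v i))\<^sup>2) \<longlonglongrightarrow> (norm (orthonormal_expansion v x))\<^sup>2"
    using orthonormal_expansion_sums[OF assms, of x] unfolding sums_def by (intro tendsto_intros)
  then show ?thesis
    unfolding sums_def by (simp add: norm_sum_orthonormal_seq[OF assms])
qed

lemma orthonormal_expansion_eq_if_dense: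
  fixes v :: "nat \<Rightarrow> 'h::{real_inner,banach}"
  assumes ons: "orthonormal_seq v" and dense: "\<And>U. open U \<Longrightarrow> U \<noteq> {} \<Longrightarrow> \<exists>d\<in>D. d \<in> U"
    and orth: "\<And>d. d \<in> D \<Longrightarrow> (d - orthonormal_expansion v d) \<bullet> x = 0"
  shows "orthonormal_expansion v x = x"
proof -
  define r where "r = x - orthonormal_expansion v x"
  have D_orth: "d \<bullet> r = 0" if "d \<in> D" for d
  proof -
    have "d \<bullet> x = orthonormal_expansion v d \<bullet> x"
      using orth[OF that] by (simp add: inner_diff_left)
    also have "\<dots> = (\<Sum>i. (d \<bullet> v i) * (x \<bullet> v i))"
      using sums_unique[OF inner_orthonormal_expansion_sums[OF ons, of d x]] by (simp add: inner_commute)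
    also have "\<dots> = d \<bullet> orthonormal_expansion v x"
      using sums_unique[OF inner_orthonormal_expansion_sums[OF ons, of x d]] by (simp add: mult.commute)
    finally show ?thesis unfolding r_def by (simp add: inner_diff_right)
  qed
  have "r = 0"
  proof (rule ccontr)
    assume "r \<noteq> 0"
    then obtain d where d: "d \<in> D" "dist r d < norm r / 2"
      using dense[of "ball r (norm r / 2)"] by (auto simp: dist_commute)
    have "(norm r)\<^sup>2 = (r - d) \<bullet> r"
      using D_orth[OF d(1)] by (simp add: power2_norm_eq_inner inner_diff_left)
    also have "\<dots> \<le> norm (r - d) * norm r" by (rule norm_cauchy_schwarz)
    also have "\<dots> < norm r / 2 * norm r"
      using d(2) \<open>r \<noteq> 0\<close> by (simp add: dist_norm)
    finally show False
      using \<open>r \<noteq> 0\<close> by (simp add: power2_eq_square)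
  qed
  then show ?thesis unfolding r_def by simp
qed

lemma norm_diff_partial_sum_orthonormal_seq:
  assumes "orthonormal_seq v" and parseval: "(\<lambda>i. (x \<bullet> v i)\<^sup>2) sums (norm x)\<^sup>2"
  shows "(norm (x - (\<Sum>i<N. b i *\<^sub>R v i)))\<^sup>2
       = (\<Sum>i<N. (x \<bullet> v i - b i)\<^sup>2) + (\<Sum>i. (x \<bullet> v (i + N))\<^sup>2)"
proof -
  have "(\<lambda>i. (x \<bullet> v (i + N))\<^sup>2) sums ((norm x)\<^sup>2 - (\<Sum>i<N. (x \<bullet> v i)\<^sup>2))"
    using parseval by (subst sums_iff_shift) simp
  then show ?thesis
    unfolding norm_diff_sum_orthonormal_seq[OF assms(1) finite_lessThan]
    by (simp add: sums_iff power2_diff sum.distrib sum_subtractf sum_distrib_left mult_ac)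
qed

lemma sum_blocks_reindex:
  fixes F :: "nat \<Rightarrow> nat \<Rightarrow> 'a::comm_monoid_add"
  shows "(\<Sum>j=1..m. \<Sum>k<l. F j k) = (\<Sum>i<m*l. F (i div l + 1) (i mod l))"
proof (induction m)
  case 0
  then show ?case by simp
next
  case (Suc m)
  have "(\<Sum>k<l. F (Suc m) k) = (\<Sum>i\<in>{m*l..<m*l+l}. F (i div l + 1) (i mod l))"
    using sum.shift_bounds_nat_ivl[of "\<lambda>i. F (i div l + 1) (i mod l)" 0 "m*l" l]
    by (simp add: add.commute lessThan_atLeast0)
  moreover have "(\<Sum>i<m*l. F (i div l + 1) (i mod l)) + (\<Sum>i\<in>{m*l..<m*l+l}. F (i div l + 1) (i mod l))
      = (\<Sum>i<Suc m * l. F (i div l + 1) (i mod l))"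
    by (simp add: lessThan_atLeast0 sum.atLeastLessThan_concat add.commute)
  ultimately show ?case
    using Suc.IH by (simp add: sum.cl_ivl_Suc)
qed

lemma norm_diff_block_sum_sq:
  assumes "orthonormal_seq (\<lambda>i. u (Suc i))"
    and parseval: "(\<lambda>i. (x \<bullet> u (Suc i))\<^sup>2) sums (norm x)\<^sup>2"
  shows "(norm (x - (\<Sum>j=1..m. \<Sum>k<l. c j k *\<^sub>R u ((j-1)*l+k+1))))\<^sup>2
       = (\<Sum>j=1..m. \<Sum>k<l. (x \<bullet> u ((j-1)*l+k+1) - c j k)\<^sup>2) + (\<Sum>i. (x \<bullet> u (m*l+1+i))\<^sup>2)"
proof -
  have idx: "((i div l + 1) - 1) * l + i mod l + 1 = Suc i" for i
    by (simp add: add.commute)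
  have "(\<Sum>j=1..m. \<Sum>k<l. c j k *\<^sub>R u ((j-1)*l+k+1)) = (\<Sum>i<m*l. c (i div l + 1) (i mod l) *\<^sub>R u (Suc i))"
    by (subst sum_blocks_reindex) (simp only: idx)
  moreover have "(\<Sum>j=1..m. \<Sum>k<l. (x \<bullet> u ((j-1)*l+k+1) - c j k)\<^sup>2)
      = (\<Sum>i<m*l. (x \<bullet> u (Suc i) - c (i div l + 1) (i mod l))\<^sup>2)"
    by (subst sum_blocks_reindex) (simp only: idx)
  moreover have "(\<Sum>i. (x \<bullet> u (Suc (i + m*l)))\<^sup>2) = (\<Sum>i. (x \<bullet> u (m*l+1+i))\<^sup>2)"
    by (simp add: ac_simps)
  ultimately show ?thesis
    using norm_diff_partial_sum_orthonormal_seq[OF assms, where N="m*l" and b="\<lambda>i. c (i div l + 1) (i mod l)"]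
    by simp
qed

section \<open>Voronoi quantization\<close>

lemma sqdist_l_nonneg: "0 \<le> sqdist_l l x y"
  unfolding sqdist_l_def by (intro sum_nonneg) simp

lemma sqdist_l_measurable:
  assumes "\<And>k. k < l \<Longrightarrow> (\<lambda>w. f w k) \<in> borel_measurable M"
    and "\<And>k. k < l \<Longrightarrow> (\<lambda>w. g w k) \<in> borel_measurable M"
  shows "(\<lambda>w. sqdist_l l (f w) (g w)) \<in> borel_measurable M"
  unfolding sqdist_l_def using assms by (intro borel_measurable_sum) auto

lemma measurable_component_borel_l: "(\<lambda>x. x k) \<in> borel_measurable (borel_l l)" if "k < l"
  using measurable_component_singleton[of k "{..<l}" "\<lambda>_. lborel :: real measure"] that
  unfolding borel_l_def by simp

lemma mindist_l_measurable:
  assumes "finite \<alpha>"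
  shows "mindist_l l \<alpha> \<in> borel_measurable (borel_l l)"
proof -
  have "(\<lambda>x. sqdist_l l x a) \<in> borel_measurable (borel_l l)" for a
    by (intro sqdist_l_measurable measurable_component_borel_l) auto
  then show ?thesis
    unfolding mindist_l_def using assms by (intro borel_measurable_INF countable_finite) auto
qed

lemma voronoi_quant_measurable:
  assumes "voronoi_partition l \<alpha> C"
  shows "(\<lambda>y. voronoi_quant \<alpha> C y k) \<in> borel_measurable (borel_l l)"
  using assms unfolding voronoi_quant_def voronoi_partition_def
  by (intro borel_measurable_sum borel_measurable_times borel_measurable_indicator) auto

lemma voronoi_quant_eq_center:
  assumes "voronoi_partition l \<alpha> C" "finite \<alpha>" "b \<in> \<alpha>" "y \<in> C b"
  shows "voronoi_quant \<alpha> C y = b"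
proof
  fix k
  have "indicator (C b') y = (if b' = b then 1 else 0 :: real)" if "b' \<in> \<alpha>" for b'
    using assms that unfolding voronoi_partition_def disjoint_family_on_def
    by (cases "b' = b") (auto simp: indicator_def)
  then have "voronoi_quant \<alpha> C y k = (\<Sum>b'\<in>\<alpha>. if b' = b then b k else 0)"
    unfolding voronoi_quant_def by (intro sum.cong) auto
  then show "voronoi_quant \<alpha> C y k = b k"
    using assms(2,3) by simp
qed

lemma sqdist_voronoi_quant:
  assumes vor: "voronoi_partition l \<alpha> C" and fin: "finite \<alpha>" and y: "y \<in> space (borel_l l)"
  shows "ennreal (sqdist_l l y (voronoi_quant \<alpha> C y)) = mindist_l l \<alpha> y"
proof -
  obtain b where b: "b \<in> \<alpha>" "y \<in> C b"
    using vor y unfolding voronoi_partition_def by blast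
  then have nearest: "sqdist_l l y b \<le> sqdist_l l y c" if "c \<in> \<alpha>" for c
    using vor that unfolding voronoi_partition_def by blast
  have "mindist_l l \<alpha> y = ennreal (sqdist_l l y b)"
    unfolding mindist_l_def
    by (intro antisym INF_lower[OF b(1)] INF_greatest ennreal_leI nearest)
  then show ?thesis
    using voronoi_quant_eq_center[OF vor fin b] by simp
qed

lemma nn_integral_sqdist_voronoi_quant:
  assumes Y: "Y \<in> M \<rightarrow>\<^sub>M borel_l l" and "voronoi_partition l \<alpha> C" "finite \<alpha>"
  shows "(\<integral>\<^sup>+w. ennreal (sqdist_l l (Y w) (voronoi_quant \<alpha> C (Y w))) \<partial>M) = qdistortion M l Y \<alpha>"
  unfolding qdistortion_def
  using assms measurable_space[OF Y] by (intro nn_integral_cong sqdist_voronoi_quant) auto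

lemma qerr_sq_distr:
  assumes Y: "Y \<in> M \<rightarrow>\<^sub>M borel_l l"
  shows "qerr_sq M l Y k = qerr_sq (distr M (borel_l l) Y) l (\<lambda>x. x) k"
  unfolding qerr_sq_def qdistortion_def
  using Y mindist_l_measurable by (intro INF_cong refl) (simp add: nn_integral_distr)

section \<open>Centered Gaussian vectors with an eigenbasis of the covariance\<close>

locale gaussian_eigenexpansion = prob_space M
  for M :: "'w measure" and X :: "'w \<Rightarrow> 'h::{real_inner,banach,second_countable_topology}"
    and lam :: "nat \<Rightarrow> real" and u :: "nat \<Rightarrow> 'h" +
  assumes X_measurable[measurable]: "X \<in> borel_measurable M"
    and integrable_norm_sq: "integrable M (\<lambda>w. (norm (X w))^2)"
    and gaussian: "centered_gaussian M X"
    and lam_pos: "\<forall>j\<ge>1. lam j > 0"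
    and lam_dec: "\<forall>j\<ge>1. lam (Suc j) \<le> lam j"
    and u_orthonormal: "\<forall>i\<ge>1. \<forall>j\<ge>1. u i \<bullet> u j = (if i = j then 1 else 0)"
    and cov_u: "\<forall>j\<ge>1. cov_op M X (u j) = lam j *\<^sub>R u j"
    and cov_orth_u: "\<forall>y. (\<forall>j\<ge>1. y \<bullet> u j = 0) \<longrightarrow> cov_op M X y = 0"
begin

lemma lam_Suc_pos [simp]: "0 < lam (Suc i)"
  using lam_pos by simp

lemma lam_Suc_nonneg [simp]: "0 \<le> lam (Suc i)"
  using lam_Suc_pos less_imp_le by blast

lemma lam_Suc_neq_0 [simp]: "lam (Suc i) \<noteq> 0"
  using lam_Suc_pos by (metis less_irrefl)

lemma integrable_inner_scaleR: "integrable M (\<lambda>w. (y \<bullet> X w) *\<^sub>R X w)"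
proof (rule Bochner_Integration.integrable_bound[of _ "\<lambda>w. norm y * (norm (X w))^2"])
  show "integrable M (\<lambda>w. norm y * (norm (X w))^2)"
    using integrable_norm_sq by simp
  show "AE w in M. norm ((y \<bullet> X w) *\<^sub>R X w) \<le> norm (norm y * (norm (X w))^2)"
  proof (rule AE_I2)
    fix w
    have "\<bar>y \<bullet> X w\<bar> * norm (X w) \<le> (norm y * norm (X w)) * norm (X w)"
      by (intro mult_right_mono Cauchy_Schwarz_ineq2) auto
    then show "norm ((y \<bullet> X w) *\<^sub>R X w) \<le> norm (norm y * (norm (X w))^2)"
      by (simp add: power2_eq_square)
  qed
qed measurable

lemma integrable_inner_mult: "integrable M (\<lambda>w. (y \<bullet> X w) * (z \<bullet> X w))"
  using integrable_inner_right[OF integrable_inner_scaleR[of y], of z] by (simp add: mult.commute)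

lemma integral_inner_mult: "(\<integral>w. (y \<bullet> X w) * (z \<bullet> X w) \<partial>M) = z \<bullet> cov_op M X y"
  unfolding cov_op_def
  using integral_inner_right[OF integrable_inner_scaleR[of y], of z] by (simp add: mult.commute)

lemma integral_inner_u_mult:
  "i \<ge> 1 \<Longrightarrow> j \<ge> 1 \<Longrightarrow> (\<integral>w. (u i \<bullet> X w) * (u j \<bullet> X w) \<partial>M) = (if i = j then lam i else 0)"
  using cov_u u_orthonormal by (simp add: integral_inner_mult)

lemma integral_inner_sum_u_sq:
  assumes K: "finite K" and inj: "inj_on idx K" and pos: "\<And>k. k \<in> K \<Longrightarrow> idx k \<ge> 1"
  shows "(\<integral>w. ((\<Sum>k\<in>K. b k *\<^sub>R u (idx k)) \<bullet> X w)^2 \<partial>M) = (\<Sum>k\<in>K. (b k)^2 * lam (idx k))"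
proof -
  have "(\<integral>w. ((\<Sum>k\<in>K. b k *\<^sub>R u (idx k)) \<bullet> X w)^2 \<partial>M)
      = (\<Sum>k\<in>K. \<Sum>k'\<in>K. b k * b k' * (\<integral>w. (u (idx k) \<bullet> X w) * (u (idx k') \<bullet> X w) \<partial>M))"
    by (simp add: inner_sum_left power2_eq_square sum_product mult_ac integrable_inner_mult
        Bochner_Integration.integral_sum)
  also have "\<dots> = (\<Sum>k\<in>K. \<Sum>k'\<in>K. if k = k' then b k * b k' * lam (idx k) else 0)"
    using inj pos by (intro sum.cong refl) (auto simp: integral_inner_u_mult inj_on_def)
  also have "\<dots> = (\<Sum>k\<in>K. (b k)^2 * lam (idx k))"
    using K by (simp add: power2_eq_square)
  finally show ?thesis .
qed

lemma char_inner: "(\<integral>w. iexp (y \<bullet> X w) \<partial>M) = complex_of_real (exp (- (\<integral>w. (y \<bullet> X w)^2 \<partial>M) / 2))"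
proof -
  consider (normal) \<sigma> where "\<sigma> > 0" "distributed M lborel (\<lambda>w. y \<bullet> X w) (\<lambda>x. ennreal (normal_density 0 \<sigma> x))"
    | (degenerate) "AE w in M. y \<bullet> X w = 0"
    using gaussian unfolding centered_gaussian_def by blast
  then show ?thesis
  proof cases
    case degenerate
    have "(\<integral>w. iexp (y \<bullet> X w) \<partial>M) = (\<integral>w. 1 \<partial>M)"
      by (rule integral_cong_AE) (use degenerate in auto)
    moreover have "(\<integral>w. (y \<bullet> X w)^2 \<partial>M) = (\<integral>w. 0 \<partial>M)"
      by (rule integral_cong_AE) (use degenerate in auto)
    ultimately show ?thesis by (simp add: prob_space)
  next
    case normal
    have "(\<integral>w. (y \<bullet> X w)^2 \<partial>M) = \<sigma>^2"
      using normal_distributed_variance[OF normal] normal_distributed_expectation[OF normal] by simp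
    moreover have "distributed M lborel (\<lambda>w. ((y \<bullet> X w) - 0) / \<sigma>) std_normal_density"
      using normal_standard_normal_convert[OF normal(1)] normal(2) by simp
    then have "distr M lborel (\<lambda>w. (y \<bullet> X w) / \<sigma>) = std_normal_distribution"
      by (simp add: distributed_def)
    moreover have "(\<integral>w. iexp (y \<bullet> X w) \<partial>M) = (\<integral>x. iexp (\<sigma> * x) \<partial>distr M lborel (\<lambda>w. (y \<bullet> X w) / \<sigma>))"
      using normal(1) by (subst integral_distr) auto
    moreover have "(\<integral>x. iexp (\<sigma> * x) \<partial>std_normal_distribution) = complex_of_real (exp (- (\<sigma>^2) / 2))"
      by (metis char_def char_std_normal_distribution)
    ultimately show ?thesis by simp
  qed
qed

lemma orthonormal_seq_u: "orthonormal_seq (\<lambda>i. u (Suc i))"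
  using u_orthonormal unfolding orthonormal_seq_def by auto

text \<open>Every vector orthogonal to all \<open>u j\<close> has zero variance against \<open>X\<close>, so on a
  countable dense set the residuals of the expansion are almost surely orthogonal to \<open>X\<close>.\<close>
lemma AE_parseval: "AE w in M. (\<lambda>i. (X w \<bullet> u (Suc i))^2) sums (norm (X w))^2"
proof -
  define v where "v i = u (Suc i)" for i
  have ons: "orthonormal_seq v" unfolding v_def by (rule orthonormal_seq_u)
  obtain D :: "'h set" where D: "countable D" "\<And>U. open U \<Longrightarrow> U \<noteq> {} \<Longrightarrow> \<exists>d\<in>D. d \<in> U"
    using countable_dense_exists by blast
  have "AE w in M. (d - orthonormal_expansion v d) \<bullet> X w = 0" for d
  proof -
    define r where "r = d - orthonormal_expansion v d"
    have "r \<bullet> u j = 0" if "j \<ge> 1" for j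
      using inner_orthonormal_expansion_basis[OF ons, of "j - 1" d] that
      by (simp add: r_def v_def inner_diff_left inner_diff_right inner_commute)
    then have "(\<integral>w. (r \<bullet> X w) * (r \<bullet> X w) \<partial>M) = 0"
      using cov_orth_u by (simp add: integral_inner_mult)
    then have "AE w in M. (r \<bullet> X w) * (r \<bullet> X w) = 0"
      by (subst (asm) integral_nonneg_eq_0_iff_AE) (auto simp: integrable_inner_mult)
    then show ?thesis unfolding r_def by (auto elim: AE_mp)
  qed
  then have "AE w in M. \<forall>d\<in>D. (d - orthonormal_expansion v d) \<bullet> X w = 0"
    using D(1) by (subst AE_ball_countable) auto
  then show ?thesis
  proof (rule AE_mp, intro AE_I2 impI)
    fix w assume "\<forall>d\<in>D. (d - orthonormal_expansion v d) \<bullet> X w = 0"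
    then have "orthonormal_expansion v (X w) = X w"
      by (intro orthonormal_expansion_eq_if_dense[OF ons D(2)]) auto
    then show "(\<lambda>i. (X w \<bullet> u (Suc i))^2) sums (norm (X w))^2"
      using norm_orthonormal_expansion_sums[OF ons, of "X w"] unfolding v_def by simp
  qed
qed

lemma nn_integral_inner_u_sq: "(\<integral>\<^sup>+w. ennreal ((X w \<bullet> u (Suc i))^2) \<partial>M) = ennreal (lam (Suc i))"
proof -
  have "(\<integral>\<^sup>+w. ennreal ((X w \<bullet> u (Suc i))^2) \<partial>M) = ennreal (\<integral>w. (u (Suc i) \<bullet> X w) * (u (Suc i) \<bullet> X w) \<partial>M)"
    using integrable_inner_mult[of "u (Suc i)" "u (Suc i)"]
    by (subst nn_integral_eq_integral[symmetric]) (auto simp: inner_commute power2_eq_square)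
  then show ?thesis by (simp add: integral_inner_u_mult)
qed

lemma nn_integral_suminf_inner_u_sq:
  "(\<integral>\<^sup>+w. (\<Sum>i. ennreal ((X w \<bullet> u (N+1+i))^2)) \<partial>M) = (\<Sum>i. ennreal (lam (N+1+i)))"
  using nn_integral_inner_u_sq[of "N+i" for i] by (subst nn_integral_suminf) auto

lemma summable_lam: "summable (\<lambda>i. lam (N+1+i))"
proof -
  have "AE w in M. ennreal ((norm (X w))^2) = (\<Sum>i. ennreal ((X w \<bullet> u (0+1+i))^2))"
    using AE_parseval by eventually_elim (simp add: sums_iff suminf_ennreal2)
  then have "(\<Sum>i. ennreal (lam (0+1+i))) = (\<integral>\<^sup>+w. ennreal ((norm (X w))^2) \<partial>M)"
    using nn_integral_suminf_inner_u_sq[of 0] by (simp add: nn_integral_cong_AE)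
  also have "\<dots> = ennreal (\<integral>w. (norm (X w))^2 \<partial>M)"
    by (rule nn_integral_eq_integral[OF integrable_norm_sq]) simp
  finally have "summable (\<lambda>i. lam (Suc i))"
    using lam_pos by (intro summable_suminf_not_top) (auto intro: less_imp_le)
  then show ?thesis
    using summable_iff_shift[of "\<lambda>i. lam (Suc i)" N] by (simp add: ac_simps)
qed

lemma distr_whitened_coords:
  assumes inj: "inj_on idx {..<l}" and pos: "\<And>k. k < l \<Longrightarrow> idx k \<ge> 1"
  shows "distr M (borel_l l) (\<lambda>w. restrict (\<lambda>k. (u (idx k) \<bullet> X w) / sqrt (lam (idx k))) {..<l})
    = std_gauss_l l"
  unfolding borel_l_def std_gauss_l_def
proof (rule distr_PiM_eq_of_char_eq[OF finite_lessThan prob_space_axioms])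
  show "prob_space (PiM {..<l} (\<lambda>_. std_normal_distribution))"
    by (intro prob_space_PiM prob_space_normal_density) auto
  show "sets (PiM {..<l} (\<lambda>_. std_normal_distribution)) = sets (PiM {..<l} (\<lambda>_. lborel))"
    by (rule sets_PiM_cong) auto
  show "(\<lambda>w. restrict (\<lambda>k. (u (idx k) \<bullet> X w) / sqrt (lam (idx k))) {..<l}) \<in> M \<rightarrow>\<^sub>M PiM {..<l} (\<lambda>_. lborel)"
    by (rule measurable_restrict) simp
  fix t :: "nat \<Rightarrow> real"
  define y where "y = (\<Sum>k<l. (t k / sqrt (lam (idx k))) *\<^sub>R u (idx k))"
  have lam_idx: "lam (idx k) > 0" if "k < l" for k
    using lam_pos pos[OF that] by auto
  have "(\<integral>w. (y \<bullet> X w)^2 \<partial>M) = (\<Sum>k<l. (t k / sqrt (lam (idx k)))^2 * lam (idx k))"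
    unfolding y_def using inj pos by (intro integral_inner_sum_u_sq) auto
  also have "\<dots> = (\<Sum>k<l. (t k)^2)"
  proof (intro sum.cong refl)
    fix k assume "k \<in> {..<l}"
    then show "(t k / sqrt (lam (idx k)))^2 * lam (idx k) = (t k)^2"
      using lam_idx[of k] by (simp add: power_divide)
  qed
  finally show "(\<integral>w. iexp (\<Sum>k<l. t k * restrict (\<lambda>k. (u (idx k) \<bullet> X w) / sqrt (lam (idx k))) {..<l} k) \<partial>M)
      = (\<integral>x. iexp (\<Sum>k<l. t k * x k) \<partial>PiM {..<l} (\<lambda>_. std_normal_distribution))"
    using char_inner[of y] char_std_normal_PiM[of "{..<l}" t] by (simp add: y_def inner_sum_left)
qed

definition whitened_block :: "nat \<Rightarrow> nat \<Rightarrow> 'w \<Rightarrow> nat \<Rightarrow> real" where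
  "whitened_block l j w = restrict (\<lambda>k. (u ((j-1)*l+k+1) \<bullet> X w) / sqrt (lam ((j-1)*l+k+1))) {..<l}"

lemma whitened_block_measurable: "whitened_block l j \<in> M \<rightarrow>\<^sub>M borel_l l"
  unfolding whitened_block_def borel_l_def by (rule measurable_restrict) simp

lemma distr_whitened_block: "distr M (borel_l l) (whitened_block l j) = std_gauss_l l"
  unfolding whitened_block_def by (rule distr_whitened_coords) (auto simp: inj_on_def)

lemma whitened_block_component_measurable[measurable]: "(\<lambda>w. whitened_block l j w k) \<in> borel_measurable M"
  by (cases "k < l") (simp_all add: whitened_block_def)

lemma norm_diff_whitened_block_sum_sq:
  assumes parseval: "(\<lambda>i. (x \<bullet> u (Suc i))^2) sums (norm x)^2"
  shows "(norm (x - (\<Sum>j=1..m. \<Sum>k<l. (sqrt (lam ((j-1)*l+k+1)) * q j k) *\<^sub>R u ((j-1)*l+k+1))))^2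
    = (\<Sum>j=1..m. \<Sum>k<l. lam ((j-1)*l+k+1) * ((u ((j-1)*l+k+1) \<bullet> x) / sqrt (lam ((j-1)*l+k+1)) - q j k)^2)
      + (\<Sum>i. (x \<bullet> u (m*l+1+i))^2)"
proof -
  have "(x \<bullet> u (Suc i) - sqrt (lam (Suc i)) * c)^2 = lam (Suc i) * ((u (Suc i) \<bullet> x) / sqrt (lam (Suc i)) - c)^2"
    for i c
  proof -
    have "x \<bullet> u (Suc i) - sqrt (lam (Suc i)) * c = sqrt (lam (Suc i)) * ((u (Suc i) \<bullet> x) / sqrt (lam (Suc i)) - c)"
      by (simp add: inner_commute field_simps)
    then show ?thesis by (simp add: power_mult_distrib)
  qed
  then show ?thesis
    unfolding norm_diff_block_sum_sq[OF orthonormal_seq_u parseval] by simp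
qed

lemma nn_integral_block_quantization_error:
  fixes Q :: "nat \<Rightarrow> 'w \<Rightarrow> nat \<Rightarrow> real"
  assumes Q: "\<forall>j\<in>{1..m}. \<forall>k. (\<lambda>w. Q j w k) \<in> borel_measurable M"
  shows "(\<integral>\<^sup>+w. ennreal ((norm (X w - (\<Sum>j=1..m. \<Sum>k<l.
             (sqrt (lam ((j-1)*l+k+1)) * Q j w k) *\<^sub>R u ((j-1)*l+k+1))))^2) \<partial>M)
    = (\<Sum>j=1..m. \<integral>\<^sup>+w. ennreal (\<Sum>k<l. lam ((j-1)*l+k+1) * (whitened_block l j w k - Q j w k)^2) \<partial>M)
      + ennreal (\<Sum>i. lam (m*l+1+i))"
    (is "(\<integral>\<^sup>+w. ennreal ((norm (X w - ?Xhat w))^2) \<partial>M) = _")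
proof -
  define A where "A j w = (\<Sum>k<l. lam ((j-1)*l+k+1) * (whitened_block l j w k - Q j w k)^2)" for j w
  define T where "T w = (\<Sum>i. ennreal ((X w \<bullet> u (m*l+1+i))^2))" for w
  have A_nonneg: "0 \<le> A j w" for j w
    unfolding A_def by (intro sum_nonneg mult_nonneg_nonneg) auto
  have A_measurable: "(\<lambda>w. A j w) \<in> borel_measurable M" if "j \<in> {1..m}" for j
  proof -
    have [measurable]: "(\<lambda>w. Q j w k) \<in> borel_measurable M" for k
      using Q that by blast
    show ?thesis unfolding A_def by measurable
  qed
  have "AE w in M. ennreal ((norm (X w - ?Xhat w))^2) = ennreal (\<Sum>j=1..m. A j w) + T w"
    using AE_parseval
  proof eventually_elim
    case (elim w)
    have "(norm (X w - ?Xhat w))^2 = (\<Sum>j=1..m. A j w) + (\<Sum>i. (X w \<bullet> u (m*l+1+i))^2)"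
      unfolding norm_diff_whitened_block_sum_sq[OF elim] A_def
      by (intro arg_cong2[where f="(+)"] sum.cong refl) (simp add: whitened_block_def)
    moreover have summable_tail: "summable (\<lambda>i. (X w \<bullet> u (m*l+1+i))^2)"
      using elim summable_iff_shift[of "\<lambda>i. (X w \<bullet> u (Suc i))^2" "m*l"]
      by (simp add: sums_iff ac_simps)
    moreover have "T w = ennreal (\<Sum>i. (X w \<bullet> u (m*l+1+i))^2)"
      unfolding T_def by (rule suminf_ennreal2[OF _ summable_tail]) simp
    ultimately show ?case
      by (simp only:) (intro ennreal_plus sum_nonneg suminf_nonneg A_nonneg zero_le_power2)
  qed
  then have "(\<integral>\<^sup>+w. ennreal ((norm (X w - ?Xhat w))^2) \<partial>M)
      = (\<integral>\<^sup>+w. ennreal (\<Sum>j=1..m. A j w) + T w \<partial>M)"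
    by (rule nn_integral_cong_AE)
  also have "\<dots> = (\<integral>\<^sup>+w. ennreal (\<Sum>j=1..m. A j w) \<partial>M) + (\<integral>\<^sup>+w. T w \<partial>M)"
  proof (rule nn_integral_add)
    show "(\<lambda>w. ennreal (\<Sum>j=1..m. A j w)) \<in> borel_measurable M"
      using A_measurable by (intro measurable_compose[OF borel_measurable_sum measurable_ennreal]) auto
    show "T \<in> borel_measurable M"
      unfolding T_def by measurable
  qed
  also have "(\<integral>\<^sup>+w. ennreal (\<Sum>j=1..m. A j w) \<partial>M) = (\<Sum>j=1..m. \<integral>\<^sup>+w. ennreal (A j w) \<partial>M)"
  proof -
    have "ennreal (\<Sum>j=1..m. A j w) = (\<Sum>j=1..m. ennreal (A j w))" for w
      using A_nonneg by (simp add: sum_ennreal)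
    then have "(\<integral>\<^sup>+w. ennreal (\<Sum>j=1..m. A j w) \<partial>M) = (\<integral>\<^sup>+w. (\<Sum>j=1..m. ennreal (A j w)) \<partial>M)"
      by simp
    also have "\<dots> = (\<Sum>j=1..m. \<integral>\<^sup>+w. ennreal (A j w) \<partial>M)"
      using A_measurable by (intro nn_integral_sum) auto
    finally show ?thesis .
  qed
  also have "(\<integral>\<^sup>+w. T w \<partial>M) = ennreal (\<Sum>i. lam (m*l+1+i))"
    unfolding T_def nn_integral_suminf_inner_u_sq
    by (intro suminf_ennreal2 summable_lam) simp
  finally show ?thesis unfolding A_def .
qed

lemma nn_integral_sqdist_voronoi_block:
  assumes opt: "L2_optimal_quantizer M l (whitened_block l j) k \<alpha>" and vor: "voronoi_partition l \<alpha> C"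
  shows "(\<integral>\<^sup>+w. ennreal (sqdist_l l (whitened_block l j w) (voronoi_quant \<alpha> C (whitened_block l j w))) \<partial>M)
    = qerr_sq (std_gauss_l l) l (\<lambda>x. x) k"
proof -
  have "finite \<alpha>" "qdistortion M l (whitened_block l j) \<alpha> = qerr_sq M l (whitened_block l j) k"
    using opt unfolding L2_optimal_quantizer_def by auto
  then show ?thesis
    by (simp add: nn_integral_sqdist_voronoi_quant[OF whitened_block_measurable vor]
        qerr_sq_distr[OF whitened_block_measurable] distr_whitened_block)
qed

lemma nn_integral_block_weighted_le:
  assumes Z: "\<And>k. (\<lambda>w. Z w k) \<in> borel_measurable M" and Q: "\<And>k. (\<lambda>w. Q w k) \<in> borel_measurable M"
  shows "(\<integral>\<^sup>+w. ennreal (\<Sum>k<l. lam ((j-1)*l+k+1) * (Z w k - Q w k)^2) \<partial>M)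
    \<le> ennreal (lam ((j-1)*l+1)) * (\<integral>\<^sup>+w. ennreal (sqdist_l l (Z w) (Q w)) \<partial>M)"
proof -
  have "lam ((j-1)*l+k+1) \<le> lam ((j-1)*l+1)" for k
    using lam_dec lift_Suc_antimono_le[of "\<lambda>i. lam (Suc i)" "(j-1)*l" "(j-1)*l+k"] by simp
  then have "(\<Sum>k<l. lam ((j-1)*l+k+1) * (Z w k - Q w k)^2) \<le> lam ((j-1)*l+1) * sqdist_l l (Z w) (Q w)" for w
    unfolding sqdist_l_def sum_distrib_left by (intro sum_mono mult_right_mono) auto
  then have "(\<integral>\<^sup>+w. ennreal (\<Sum>k<l. lam ((j-1)*l+k+1) * (Z w k - Q w k)^2) \<partial>M)
      \<le> (\<integral>\<^sup>+w. ennreal (lam ((j-1)*l+1)) * ennreal (sqdist_l l (Z w) (Q w)) \<partial>M)"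
    by (intro nn_integral_mono) (simp add: ennreal_mult[symmetric] sqdist_l_nonneg ennreal_leI)
  also have "\<dots> = ennreal (lam ((j-1)*l+1)) * (\<integral>\<^sup>+w. ennreal (sqdist_l l (Z w) (Q w)) \<partial>M)"
    using measurable_compose[OF sqdist_l_measurable[OF Z Q] measurable_ennreal]
    by (rule nn_integral_cmult)
  finally show ?thesis .
qed

lemma nn_integral_block_weighted_eq:
  assumes const: "\<forall>k<l. lam ((j-1)*l+k+1) = lam ((j-1)*l+1)"
    and Z: "\<And>k. (\<lambda>w. Z w k) \<in> borel_measurable M" and Q: "\<And>k. (\<lambda>w. Q w k) \<in> borel_measurable M"
  shows "(\<integral>\<^sup>+w. ennreal (\<Sum>k<l. lam ((j-1)*l+k+1) * (Z w k - Q w k)^2) \<partial>M)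
    = ennreal (lam ((j-1)*l+1)) * (\<integral>\<^sup>+w. ennreal (sqdist_l l (Z w) (Q w)) \<partial>M)"
proof -
  have "(\<Sum>k<l. lam ((j-1)*l+k+1) * (Z w k - Q w k)^2) = lam ((j-1)*l+1) * sqdist_l l (Z w) (Q w)" for w
    unfolding sqdist_l_def sum_distrib_left using const by (intro sum.cong) auto
  then have "(\<integral>\<^sup>+w. ennreal (\<Sum>k<l. lam ((j-1)*l+k+1) * (Z w k - Q w k)^2) \<partial>M)
      = (\<integral>\<^sup>+w. ennreal (lam ((j-1)*l+1)) * ennreal (sqdist_l l (Z w) (Q w)) \<partial>M)"
    by (simp add: ennreal_mult[symmetric] sqdist_l_nonneg)
  also have "\<dots> = ennreal (lam ((j-1)*l+1)) * (\<integral>\<^sup>+w. ennreal (sqdist_l l (Z w) (Q w)) \<partial>M)"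
    using measurable_compose[OF sqdist_l_measurable[OF Z Q] measurable_ennreal]
    by (rule nn_integral_cmult)
  finally show ?thesis .
qed

lemma nn_integral_voronoi_block_le:
  assumes "L2_optimal_quantizer M l (whitened_block l j) k \<alpha>" and vor: "voronoi_partition l \<alpha> C"
  shows "(\<integral>\<^sup>+w. ennreal (\<Sum>i<l. lam ((j-1)*l+i+1) * (whitened_block l j w i - voronoi_quant \<alpha> C (whitened_block l j w) i)^2) \<partial>M)
    \<le> ennreal (lam ((j-1)*l+1)) * qerr_sq (std_gauss_l l) l (\<lambda>x. x) k"
proof -
  have "(\<lambda>w. voronoi_quant \<alpha> C (whitened_block l j w) i) \<in> borel_measurable M" for i
    by (rule measurable_compose[OF whitened_block_measurable voronoi_quant_measurable[OF vor]])
  from nn_integral_block_weighted_le[where Z="whitened_block l j" and Q="\<lambda>w. voronoi_quant \<alpha> C (whitened_block l j w)" and j=j and l=l,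
      OF whitened_block_component_measurable this]
  show ?thesis unfolding nn_integral_sqdist_voronoi_block[OF assms] .
qed

lemma nn_integral_voronoi_block_eq:
  assumes "L2_optimal_quantizer M l (whitened_block l j) k \<alpha>" and vor: "voronoi_partition l \<alpha> C"
    and const: "\<forall>i<l. lam ((j-1)*l+i+1) = lam ((j-1)*l+1)"
  shows "(\<integral>\<^sup>+w. ennreal (\<Sum>i<l. lam ((j-1)*l+i+1) * (whitened_block l j w i - voronoi_quant \<alpha> C (whitened_block l j w) i)^2) \<partial>M)
    = ennreal (lam ((j-1)*l+1)) * qerr_sq (std_gauss_l l) l (\<lambda>x. x) k"
proof -
  have "(\<lambda>w. voronoi_quant \<alpha> C (whitened_block l j w) i) \<in> borel_measurable M" for i
    by (rule measurable_compose[OF whitened_block_measurable voronoi_quant_measurable[OF vor]])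
  from nn_integral_block_weighted_eq[where Z="whitened_block l j" and Q="\<lambda>w. voronoi_quant \<alpha> C (whitened_block l j w)" and j=j and l=l,
      OF const whitened_block_component_measurable this]
  show ?thesis unfolding nn_integral_sqdist_voronoi_block[OF assms(1,2)] .
qed

end

theorem lemma1:
  fixes M :: "'w measure"
    and X :: "'w \<Rightarrow> 'h::{real_inner,banach,second_countable_topology}"
    and lam :: "nat \<Rightarrow> real" and u :: "nat \<Rightarrow> 'h"
    and n m l :: nat and nn :: "nat \<Rightarrow> nat"
    and \<alpha> :: "nat \<Rightarrow> (nat \<Rightarrow> real) set"
    and C :: "nat \<Rightarrow> (nat \<Rightarrow> real) \<Rightarrow> (nat \<Rightarrow> real) set"
  assumes "prob_space M"
    and "X \<in> borel_measurable M"
    and "integrable M (\<lambda>w. (norm (X w))^2)"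
    and "centered_gaussian M X"
    and lam_pos: "\<forall>j\<ge>1. lam j > 0"
    and lam_dec: "\<forall>j\<ge>1. lam (Suc j) \<le> lam j"
    and u_on: "\<forall>i\<ge>1. \<forall>j\<ge>1. u i \<bullet> u j = (if i = j then 1 else 0)"
    and eig: "\<forall>j\<ge>1. cov_op M X (u j) = lam j *\<^sub>R u j"
    and all_eig: "\<forall>y. (\<forall>j\<ge>1. y \<bullet> u j = 0) \<longrightarrow> cov_op M X y = 0"
    and "n \<ge> 1" and "m \<ge> 1" and "l \<ge> 1"
    and nn_pos: "\<forall>j\<in>{1..m}. nn j \<ge> 1"
    and prod_le: "(\<Prod>j=1..m. nn j) \<le> n"
    and opt: "\<forall>j\<in>{1..m}. L2_optimal_quantizer M l
               (\<lambda>w. restrict (\<lambda>k. (u ((j-1)*l+k+1) \<bullet> X w) / sqrt (lam ((j-1)*l+k+1))) {..<l})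
               (nn j) (\<alpha> j)"
    and vor: "\<forall>j\<in>{1..m}. voronoi_partition l (\<alpha> j) (C j)"
  shows "let Zb = (\<lambda>j w. restrict (\<lambda>k. (u ((j-1)*l+k+1) \<bullet> X w) / sqrt (lam ((j-1)*l+k+1))) {..<l});
             Xhat = (\<lambda>w. \<Sum>j=1..m. \<Sum>k<l.
                       (sqrt (lam ((j-1)*l+k+1)) * voronoi_quant (\<alpha> j) (C j) (Zb j w) k) *\<^sub>R u ((j-1)*l+k+1));
             err = (\<integral>\<^sup>+ w. ennreal ((norm (X w - Xhat w))^2) \<partial>M);
             bound = (\<Sum>j=1..m. ennreal (lam ((j-1)*l+1)) * qerr_sq (std_gauss_l l) l (\<lambda>x. x) (nn j))
                     + ennreal (\<Sum>i. lam (m*l+1+i))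
         in err \<le> bound \<and>
            ((l = 1 \<or> (\<forall>j\<in>{1..m}. \<forall>k<l. lam ((j-1)*l+k+1) = lam ((j-1)*l+1))) \<longrightarrow> err = bound)"
proof -
  interpret gaussian_eigenexpansion M X lam u
    using assms(1-9) by (intro gaussian_eigenexpansion.intro gaussian_eigenexpansion_axioms.intro)
  have Zb: "(\<lambda>j w. restrict (\<lambda>k. (u ((j-1)*l+k+1) \<bullet> X w) / sqrt (lam ((j-1)*l+k+1))) {..<l}) = whitened_block l"
    by (simp add: fun_eq_iff whitened_block_def)
  have opt_block: "L2_optimal_quantizer M l (whitened_block l j) (nn j) (\<alpha> j)" if "j \<in> {1..m}" for j
    using opt that by (simp add: whitened_block_def[abs_def])
  define Q where "Q j w = voronoi_quant (\<alpha> j) (C j) (whitened_block l j w)" for j w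
  have Q_measurable: "\<forall>j\<in>{1..m}. \<forall>k. (\<lambda>w. Q j w k) \<in> borel_measurable M"
    unfolding Q_def using vor
    by (auto intro: measurable_compose[OF whitened_block_measurable voronoi_quant_measurable])
  show ?thesis
    unfolding Let_def Zb Q_def[symmetric] nn_integral_block_quantization_error[OF Q_measurable]
    unfolding Q_def
    by (intro conjI impI add_right_mono sum_mono arg_cong2[where f="(+)"] sum.cong refl
        nn_integral_voronoi_block_le nn_integral_voronoi_block_eq) (auto simp: opt_block vor)
qed

end
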